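(* Let $n\in\mathbb N$ and $0<\gamma\le1/20$. Let $G$ be a graph of order $n$ with $(1/2-\gamma)n\le\delta(G)\le\Delta(G)\le3n/5$. Suppose that $|N(x)\triangle N(y)|\le\gamma n$ for every edge $xy\in E(G)$. Then there exists a bipartition $X,Y$ of $V(G)$ such that $\delta(G[X]),\delta(G[Y])\ge(1/2-5\gamma)n$ and $(1/2-5\gamma)n\le|X|,|Y|\le(1/2+5\gamma)n$.
   Context: $\delta(G)$ and $\Delta(G)$ are the minimum and maximum degree of $G$, $N(x)$ is the neighbourhood of $x$, and $\triangle$ denotes symmetric difference. *)

theory Defs
  imports Main "HOL-Library.Multiset" Complex_Main
begin

definition simple_graph :: "'a set \<Rightarrow> ('a \<Rightarrow> 'a \<Rightarrow> bool) \<Rightarrow> bool" where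
  "simple_graph V E \<longleftrightarrow> finite V \<and> (\<forall>x y. E x y \<longrightarrow> x \<in> V \<and> y \<in> V)
     \<and> (\<forall>x y. E x y \<longrightarrow> E y x) \<and> (\<forall>x. \<not> E x x)"

definition nbhd :: "'a set \<Rightarrow> ('a \<Rightarrow> 'a \<Rightarrow> bool) \<Rightarrow> 'a \<Rightarrow> 'a set" where
  "nbhd V E x = {y \<in> V. E x y}"

definition degree :: "'a set \<Rightarrow> ('a \<Rightarrow> 'a \<Rightarrow> bool) \<Rightarrow> 'a \<Rightarrow> nat" where
  "degree V E x = card (nbhd V E x)"

definition min_degree :: "'a set \<Rightarrow> ('a \<Rightarrow> 'a \<Rightarrow> bool) \<Rightarrow> nat" where
  "min_degree V E = Min (degree V E ` V)"

definition max_degree :: "'a set \<Rightarrow> ('a \<Rightarrow> 'a \<Rightarrow> bool) \<Rightarrow> nat" where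
  "max_degree V E = Max (degree V E ` V)"

definition induced :: "('a \<Rightarrow> 'a \<Rightarrow> bool) \<Rightarrow> 'a set \<Rightarrow> ('a \<Rightarrow> 'a \<Rightarrow> bool)" where
  "induced E X = (\<lambda>x y. x \<in> X \<and> y \<in> X \<and> E x y)"

end

theory Submission
  imports Defs
begin

text \<open>Fix a vertex \<open>v\<close> and let \<open>A = N(v)\<close>. Every neighbour of \<open>v\<close> has at most \<open>\<gamma>n\<close> neighbours
outside \<open>A\<close>, and moving along an edge changes \<open>|N(y) \<inter> A|\<close> by at most \<open>\<gamma>n\<close>. Hence every vertex
with a neighbour in \<open>A\<close> has about \<open>n/2\<close> of them, and the set \<open>X\<close> of such vertices is closed under
adjacency, i.e. a union of components. Counting the edges between \<open>A\<close> and \<open>V - A\<close>, which has at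
least \<open>2n/5\<close> vertices, shows \<open>X \<noteq> V\<close>. So \<open>G\<close> splits into two nonempty unions of components
\<open>X\<close> and \<open>V - X\<close>; each keeps all degrees, hence has minimum degree and order at least
\<open>(1/2 - \<gamma>)n\<close>, which also bounds both orders by \<open>(1/2 + \<gamma>)n\<close>.\<close>

lemma min_degree_le_degree:
  "finite V \<Longrightarrow> x \<in> V \<Longrightarrow> min_degree V E \<le> degree V E x"
  unfolding min_degree_def by (intro Min_le) auto

lemma degree_le_max_degree:
  "finite V \<Longrightarrow> x \<in> V \<Longrightarrow> degree V E x \<le> max_degree V E"
  unfolding max_degree_def by (intro Max_ge) auto

lemma min_degree_geI:
  assumes "finite V" "V \<noteq> {}" "\<And>x. x \<in> V \<Longrightarrow> d \<le> degree V E x"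
  shows "d \<le> min_degree V E"
  unfolding min_degree_def using assms by (subst Min_ge_iff) auto

definition edge_closed :: "('a \<Rightarrow> 'a \<Rightarrow> bool) \<Rightarrow> 'a set \<Rightarrow> bool" where
  "edge_closed E X \<longleftrightarrow> (\<forall>y z. E y z \<longrightarrow> y \<in> X \<longrightarrow> z \<in> X)"

context
  fixes V :: "'a set" and E :: "'a \<Rightarrow> 'a \<Rightarrow> bool"
  assumes G: "simple_graph V E"
begin

lemma finite_vertices: "finite V"
  using G by (simp add: simple_graph_def)

lemma mem_nbhd_iff: "y \<in> nbhd V E x \<longleftrightarrow> E x y"
  using G by (auto simp: simple_graph_def nbhd_def)

lemma edge_sym: "E x y \<longleftrightarrow> E y x"
  using G unfolding simple_graph_def by blast

lemma nbhd_subset: "nbhd V E x \<subseteq> V"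
  by (simp add: nbhd_def)

lemma finite_nbhd: "finite (nbhd V E x)"
  using finite_subset[OF nbhd_subset finite_vertices] .

lemma edge_closed_Diff:
  assumes "edge_closed E X"
  shows "edge_closed E (V - X)"
  using assms G unfolding edge_closed_def simple_graph_def by blast

lemma nbhd_induced_edge_closed:
  assumes "edge_closed E X" "X \<subseteq> V" "x \<in> X"
  shows "nbhd X (induced E X) x = nbhd V E x"
  using assms G by (auto simp: edge_closed_def nbhd_def induced_def simple_graph_def)

lemma min_degree_induced_edge_closed:
  assumes "edge_closed E X" "X \<subseteq> V" "X \<noteq> {}"
  shows "min_degree V E \<le> min_degree X (induced E X)"
proof (rule min_degree_geI)
  show "finite X" using assms(2) finite_vertices finite_subset by blast
  fix x assume "x \<in> X"
  then show "min_degree V E \<le> degree X (induced E X) x"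
    using assms min_degree_le_degree[OF finite_vertices]
    by (auto simp: degree_def nbhd_induced_edge_closed)
qed (use assms in auto)

lemma min_degree_less_card_edge_closed:
  assumes "edge_closed E X" "X \<subseteq> V" "x \<in> X"
  shows "min_degree V E < card X"
proof -
  have "insert x (nbhd V E x) \<subseteq> X"
    using assms by (auto simp: edge_closed_def mem_nbhd_iff)
  moreover have "x \<notin> nbhd V E x"
    using G by (simp add: mem_nbhd_iff simple_graph_def)
  moreover have "finite X"
    using assms(2) finite_vertices finite_subset by blast
  ultimately have "degree V E x < card X"
    unfolding degree_def by (metis card_insert_disjoint card_mono finite_nbhd less_eq_Suc_le)
  then show ?thesis
    using assms min_degree_le_degree[OF finite_vertices] by (meson le_less_trans subsetD)
qed

lemma card_nbhd_Int_le_edge: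
  assumes sym: "\<forall>x y. E x y \<longrightarrow> real (card (sym_diff (nbhd V E x) (nbhd V E y))) \<le> s"
    and "E x y"
  shows "real (card (nbhd V E x \<inter> S)) \<le> real (card (nbhd V E y \<inter> S)) + s"
proof -
  let ?Nx = "nbhd V E x" and ?Ny = "nbhd V E y"
  have "card (?Nx \<inter> S) \<le> card ((?Ny \<inter> S) \<union> (?Nx - ?Ny))"
    by (intro card_mono) (auto simp: finite_nbhd)
  also have "\<dots> \<le> card (?Ny \<inter> S) + card (?Nx - ?Ny)"
    by (rule card_Un_le)
  also have "card (?Nx - ?Ny) \<le> card (sym_diff ?Nx ?Ny)"
    by (intro card_mono) (auto simp: finite_nbhd)
  finally have "real (card (?Nx \<inter> S)) \<le> real (card (?Ny \<inter> S)) + real (card (sym_diff ?Nx ?Ny))"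
    by simp
  with sym \<open>E x y\<close> show ?thesis by fastforce
qed

lemma sum_card_nbhd_Int_swap:
  assumes "A \<subseteq> V" "B \<subseteq> V"
  shows "(\<Sum>y\<in>B. card (nbhd V E y \<inter> A)) = (\<Sum>a\<in>A. card (nbhd V E a \<inter> B))"
proof -
  have fin: "finite A" "finite B"
    using assms finite_vertices finite_subset by blast+
  have count: "card (nbhd V E y \<inter> C) = (\<Sum>c\<in>C. if E y c then 1 else 0)" if "finite C" for y C
  proof -
    have "nbhd V E y \<inter> C = {c \<in> C. E y c}" by (auto simp: mem_nbhd_iff)
    then show ?thesis using that by (simp add: sum.If_cases Int_def)
  qed
  have "(\<Sum>y\<in>B. card (nbhd V E y \<inter> A)) = (\<Sum>y\<in>B. \<Sum>a\<in>A. if E y a then 1 else 0)"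
    using fin by (simp add: count)
  also have "\<dots> = (\<Sum>a\<in>A. \<Sum>y\<in>B. if E y a then 1 else 0)"
    by (rule sum.swap)
  also have "\<dots> = (\<Sum>a\<in>A. \<Sum>y\<in>B. if E a y then 1 else 0)"
    by (intro sum.cong refl) (simp add: edge_sym)
  also have "\<dots> = (\<Sum>a\<in>A. card (nbhd V E a \<inter> B))"
    using fin by (simp add: count)
  finally show ?thesis .
qed

context
  fixes s d :: real
  assumes sym: "\<forall>x y. E x y \<longrightarrow> real (card (sym_diff (nbhd V E x) (nbhd V E y))) \<le> s"
    and deg: "\<And>x. x \<in> V \<Longrightarrow> d \<le> real (degree V E x)"
begin

lemma card_nbhd_Int_nbhd_lower:
  assumes "nbhd V E y \<inter> nbhd V E v \<noteq> {}"
  shows "d - 2 * s \<le> real (card (nbhd V E y \<inter> nbhd V E v))"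
proof -
  obtain u where u: "u \<in> nbhd V E y" "u \<in> nbhd V E v" using assms by blast
  then have "E u v" "E u y"
    by (auto simp: mem_nbhd_iff edge_sym)
  have "u \<in> V" using u(1) nbhd_subset by blast
  have "d \<le> real (card (nbhd V E u \<inter> nbhd V E u))"
    using deg[OF \<open>u \<in> V\<close>] by (simp add: degree_def)
  also have "\<dots> \<le> real (card (nbhd V E v \<inter> nbhd V E u)) + s"
    using card_nbhd_Int_le_edge[OF sym \<open>E u v\<close>] .
  also have "\<dots> \<le> real (card (nbhd V E y \<inter> nbhd V E v)) + 2 * s"
    using card_nbhd_Int_le_edge[OF sym \<open>E u y\<close>, of "nbhd V E v"] by (simp add: Int_commute)
  finally show ?thesis by simp
qed

lemma edge_closed_second_nbhd:
  assumes gap: "3 * s < d"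
  shows "edge_closed E {y \<in> V. nbhd V E y \<inter> nbhd V E v \<noteq> {}}"
  unfolding edge_closed_def
proof (intro allI impI)
  fix y z assume "E y z" and y: "y \<in> {y \<in> V. nbhd V E y \<inter> nbhd V E v \<noteq> {}}"
  have "d - 2 * s \<le> real (card (nbhd V E y \<inter> nbhd V E v))"
    using card_nbhd_Int_nbhd_lower y by blast
  also have "\<dots> \<le> real (card (nbhd V E z \<inter> nbhd V E v)) + s"
    using card_nbhd_Int_le_edge[OF sym \<open>E y z\<close>] .
  finally have "nbhd V E z \<inter> nbhd V E v \<noteq> {}"
    using gap by auto
  moreover have "z \<in> V" using \<open>E y z\<close> G by (simp add: simple_graph_def)
  ultimately show "z \<in> {y \<in> V. nbhd V E y \<inter> nbhd V E v \<noteq> {}}" by blast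
qed

lemma second_nbhd_neq_vertices:
  assumes Deg: "\<And>x. x \<in> V \<Longrightarrow> real (degree V E x) \<le> D"
    and "v \<in> V" "0 \<le> s" "2 * s \<le> d"
    and sparse: "D * s < (real (card V) - D) * (d - 2 * s)"
  shows "{y \<in> V. nbhd V E y \<inter> nbhd V E v \<noteq> {}} \<noteq> V"
proof
  assume all: "{y \<in> V. nbhd V E y \<inter> nbhd V E v \<noteq> {}} = V"
  define A where "A = nbhd V E v"
  define B where "B = V - A"
  have AV: "A \<subseteq> V" and BV: "B \<subseteq> V" by (auto simp: A_def B_def nbhd_subset)
  have cardA: "real (card A) \<le> D"
    using Deg[OF \<open>v \<in> V\<close>] by (simp add: A_def degree_def)
  have cardB: "real (card V) - D \<le> real (card B)"
    using AV finite_vertices cardA by (simp add: B_def card_Diff_subset finite_subset card_mono of_nat_diff)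
  have lower: "d - 2 * s \<le> real (card (nbhd V E y \<inter> A))" if "y \<in> B" for y
  proof -
    have "nbhd V E y \<inter> nbhd V E v \<noteq> {}" using all that BV by blast
    then show ?thesis unfolding A_def using card_nbhd_Int_nbhd_lower by blast
  qed
  have upper: "real (card (nbhd V E a \<inter> B)) \<le> s" if "a \<in> A" for a
  proof -
    have "E a v" using that by (simp add: A_def mem_nbhd_iff edge_sym)
    from card_nbhd_Int_le_edge[OF sym this, of B] show ?thesis
      by (simp add: A_def B_def)
  qed
  have "(real (card V) - D) * (d - 2 * s) \<le> real (card B) * (d - 2 * s)"
    using cardB \<open>2 * s \<le> d\<close> by (simp add: mult_right_mono)
  also have "\<dots> \<le> (\<Sum>y\<in>B. real (card (nbhd V E y \<inter> A)))"
    using sum_mono[of B "\<lambda>_. d - 2 * s", OF lower] by simp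
  also have "\<dots> = (\<Sum>a\<in>A. real (card (nbhd V E a \<inter> B)))"
    using sum_card_nbhd_Int_swap[OF AV BV] by (metis of_nat_sum)
  also have "\<dots> \<le> real (card A) * s"
    using sum_mono[of A _ "\<lambda>_. s", OF upper] by simp
  also have "\<dots> \<le> D * s"
    using cardA \<open>0 \<le> s\<close> by (rule mult_right_mono)
  finally show False using sparse by linarith
qed

lemma exists_proper_edge_closed_subset:
  assumes Deg: "\<And>x. x \<in> V \<Longrightarrow> real (degree V E x) \<le> D"
    and "V \<noteq> {}" "0 \<le> s" "3 * s < d"
    and sparse: "D * s < (real (card V) - D) * (d - 2 * s)"
  obtains X where "edge_closed E X" "X \<subseteq> V" "X \<noteq> {}" "V - X \<noteq> {}"
proof -
  obtain v where "v \<in> V" using \<open>V \<noteq> {}\<close> by blast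
  let ?X = "{y \<in> V. nbhd V E y \<inter> nbhd V E v \<noteq> {}}"
  have "nbhd V E v \<noteq> {}"
    using deg[OF \<open>v \<in> V\<close>] \<open>0 \<le> s\<close> \<open>3 * s < d\<close> by (auto simp: degree_def)
  then have "v \<in> ?X" using \<open>v \<in> V\<close> by simp
  moreover have "2 * s \<le> d" using \<open>0 \<le> s\<close> \<open>3 * s < d\<close> by linarith
  then have "?X \<noteq> V"
    using second_nbhd_neq_vertices[OF Deg \<open>v \<in> V\<close> \<open>0 \<le> s\<close> _ sparse] by blast
  ultimately show ?thesis
    using that edge_closed_second_nbhd[OF \<open>3 * s < d\<close>] by blast
qed

end

end

theorem proposition5p5:
  fixes V :: "'a set" and E :: "'a \<Rightarrow> 'a \<Rightarrow> bool" and n :: nat and \<gamma> :: real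
  assumes G: "simple_graph V E"
    and ne: "V \<noteq> {}"
    and order: "card V = n"
    and gpos: "0 < \<gamma>" and gsmall: "\<gamma> \<le> 1/20"
    and dlow: "(1/2 - \<gamma>) * real n \<le> real (min_degree V E)"
    and Dhigh: "real (max_degree V E) \<le> 3 * real n / 5"
    and sym: "\<forall>x y. E x y \<longrightarrow>
               real (card (nbhd V E x - nbhd V E y \<union> (nbhd V E y - nbhd V E x))) \<le> \<gamma> * real n"
  shows "\<exists>X Y. X \<union> Y = V \<and> X \<inter> Y = {}
     \<and> real (min_degree X (induced E X)) \<ge> (1/2 - 5*\<gamma>) * real n
     \<and> real (min_degree Y (induced E Y)) \<ge> (1/2 - 5*\<gamma>) * real n
     \<and> (1/2 - 5*\<gamma>) * real n \<le> real (card X) \<and> real (card X) \<le> (1/2 + 5*\<gamma>) * real n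
     \<and> (1/2 - 5*\<gamma>) * real n \<le> real (card Y) \<and> real (card Y) \<le> (1/2 + 5*\<gamma>) * real n"
proof -
  have fin: "finite V" using finite_vertices[OF G] .
  have "real n > 0" using fin ne by (simp add: order[symmetric] card_gt_0_iff)
  have deg: "(1/2 - \<gamma>) * n \<le> real (degree V E x)" if "x \<in> V" for x
    using dlow min_degree_le_degree[OF fin that, of E] by linarith
  have Deg: "real (degree V E x) \<le> 3 * n / 5" if "x \<in> V" for x
    using Dhigh degree_le_max_degree[OF fin that, of E] by linarith
  have "0 < (1/2 - 4 * \<gamma>) * n" "0 < (1/5 - 9 * \<gamma> / 5) * (n * n)"
    using gsmall \<open>real n > 0\<close> by simp_all
  then have gap: "3 * (\<gamma> * n) < (1/2 - \<gamma>) * n"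
    and sparse: "3 * n / 5 * (\<gamma> * n) < (n - 3 * n / 5) * ((1/2 - \<gamma>) * n - 2 * (\<gamma> * n))"
    by (simp_all add: algebra_simps)
  obtain X where X: "edge_closed E X" "X \<subseteq> V" "X \<noteq> {}" "V - X \<noteq> {}"
    using exists_proper_edge_closed_subset[OF G sym deg Deg ne _ gap] sparse gpos order by auto
  define Y where "Y = V - X"
  have Y: "edge_closed E Y" "Y \<subseteq> V" "Y \<noteq> {}"
    using edge_closed_Diff[OF G X(1)] X(4) by (auto simp: Y_def)
  have "(1/2 - 5 * \<gamma>) * n \<le> (1/2 - \<gamma>) * n"
    using gpos by (intro mult_right_mono) auto
  then have low: "(1/2 - 5 * \<gamma>) * n \<le> real (min_degree V E)"
    using dlow by linarith
  have "min_degree V E \<le> min_degree X (induced E X)" "min_degree V E \<le> min_degree Y (induced E Y)"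
    using min_degree_induced_edge_closed[OF G] X Y by auto
  moreover have "min_degree V E < card X" "min_degree V E < card Y"
    using min_degree_less_card_edge_closed[OF G] X Y by blast+
  moreover have "real (card X) + real (card Y) = n"
    using card_mono[OF fin X(2)] X(2) fin
    by (simp add: Y_def card_Diff_subset finite_subset of_nat_diff flip: order)
  moreover have "real n - (1/2 - 5 * \<gamma>) * n = (1/2 + 5 * \<gamma>) * n"
    by (simp add: algebra_simps)
  ultimately show ?thesis
    using low X(2) unfolding Y_def
    by (intro exI[of _ X] exI[of _ "V - X"]) (auto simp flip: of_nat_le_iff)
qed

end
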